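(* Consider Algorithm AUX with parameter $t_0$ on an instance satisfying the standing assumption, with an edge labeling as in the context. For any two distinct offline vertices $u,v$ and every $t\in[0,1]$, we have $g_{u,v}(t)\le g(t)$.
   Context: **Model.** Poisson arrival model. Each online type $i$ independently arrives according to a Poisson process of rate $\lambda_i$ on $[0,1]$. On arrival, a vertex is immediately and irrevocably matched to an unmatched offline neighbor or discarded. Each offline vertex is matched at most once. The instance is a bipartite graph $(I,J,E)$ with rates $\lambda_i>0$. **Standing assumption.** There are values $x_{ij}\ge0$ (an optimal Jaillet–Lu LP solution) with $\sum_i x_{ij}=1$ for all $j$, and each type is one of two kinds: - first-class: one neighbor $j$, with $x_{ij}=\lambda_i$; - second-class: two neighbors $j_1,j_2$, with $x_{ij_1}=x_{ij_2}=\lambda_i/2$. **Labeling.** Each edge is labeled first-class or second-class. Edges of first-class types are labeled first-class. For every $j$, the first-class-labeled edges at $j$ have total $x$-value $1-\ln2$. **Reference process.** $H$ has offline vertices $a,b$; a type of rate $2\ln2$ adjacent to both; and types of rate $1-\ln2$ adjacent only to $a$, resp. only to $b$. Algorithm RES with parameter $t_0$ works as follows: - single-neighbor arrivals are matched if their neighbor is unmatched; - a two-neighbor arrival at time $t>t_0$ with an unmatched neighbor is matched to a uniformly random unmatched neighbor. On $H$ under RES, $f(t)$ is the probability that a given offline vertex is matched by time $t$, $g(t)$ the probability both are, and $\bar g=1-g$. **Algorithm AUX (parameter $t_0$).** Under AUX: - $f_u(t)$ is the probability that offline $u$ is matched by time $t$, and $\bar f_u=1-f_u$; - $g_{u,v}(t)$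 is the probability that both $u$ and $v$ are matched by time $t$; - $g'_{u,v}(t)$ is the probability that both are unmatched at time $t$. Edges are used only if their offline endpoint is unmatched. - A first-class arrival is matched to its neighbor if possible. - A second-class arrival of type $i$ with neighbors $u,v$ chooses at most one edge, with disjoint probabilities: - each first-class-labeled edge $(i,u)$ with probability $1/2$; - if the arrival time is $t>t_0$, each second-class-labeled edge $(i,u)$ with probability $\frac12\min\{\bar g(t)/(2\bar f_u(t)-g'_{u,v}(t)),1\}$ if $v$ is unmatched, or $\min\{\bar g(t)/(2\bar f_u(t)-g'_{u,v}(t)),1\}$ if $v$ is matched. *)

theory Defs
  imports "HOL-Analysis.Analysis"
begin

text \<open>A state is the set S of matched offline
vertices. rate t S u is the instantaneous rate (at time t, in state S) at which the
unmatched offline vertex u becomes matched. The law p t S = Pr[matched set at time t = S]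
of such a (Poisson-driven) process is characterised by the Kolmogorov forward equation,
written in integral form because the rates jump at t0.\<close>

definition ctmc_law :: "'j set \<Rightarrow> (real \<Rightarrow> 'j set \<Rightarrow> 'j \<Rightarrow> real)
    \<Rightarrow> (real \<Rightarrow> 'j set \<Rightarrow> real) \<Rightarrow> bool" where
  "ctmc_law J rate p \<longleftrightarrow>
     (\<forall>S. S \<subseteq> J \<longrightarrow> p 0 S = (if S = {} then 1 else 0)) \<and>
     (\<forall>t\<in>{0..1}. \<forall>S. S \<subseteq> J \<longrightarrow>
        ((\<lambda>s. (\<Sum>u\<in>S. p s (S - {u}) * rate s (S - {u}) u)
              - p s S * (\<Sum>u\<in>J - S. rate s S u))
         has_integral (p t S - p 0 S)) {0..t})"

text \<open>Reference process H (offline vertices True = a, False = b) under RES.\<close>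

definition res_rate :: "real \<Rightarrow> real \<Rightarrow> bool set \<Rightarrow> bool \<Rightarrow> real" where
  "res_rate t0 t S u =
     (1 - ln 2) + (if t > t0 then 2 * ln 2 * (1 / real (card (UNIV - S))) else 0)"

definition fH :: "(real \<Rightarrow> bool set \<Rightarrow> real) \<Rightarrow> real \<Rightarrow> real" where
  "fH q t = (\<Sum>S\<in>{S. True \<in> S}. q t S)"

definition gH :: "(real \<Rightarrow> bool set \<Rightarrow> real) \<Rightarrow> real \<Rightarrow> real" where
  "gH q t = q t UNIV"

definition fA :: "'j set \<Rightarrow> (real \<Rightarrow> 'j set \<Rightarrow> real) \<Rightarrow> real \<Rightarrow> 'j \<Rightarrow> real" where
  "fA J p t u = (\<Sum>S\<in>{S. S \<subseteq> J \<and> u \<in> S}. p t S)"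

definition gA :: "'j set \<Rightarrow> (real \<Rightarrow> 'j set \<Rightarrow> real) \<Rightarrow> real \<Rightarrow> 'j \<Rightarrow> 'j \<Rightarrow> real" where
  "gA J p t u v = (\<Sum>S\<in>{S. S \<subseteq> J \<and> u \<in> S \<and> v \<in> S}. p t S)"

definition gA' :: "'j set \<Rightarrow> (real \<Rightarrow> 'j set \<Rightarrow> real) \<Rightarrow> real \<Rightarrow> 'j \<Rightarrow> 'j \<Rightarrow> real" where
  "gA' J p t u v = (\<Sum>S\<in>{S. S \<subseteq> J \<and> u \<notin> S \<and> v \<notin> S}. p t S)"

text \<open>Probability that an arrival of type i at time t in state S (with u unmatched)
chooses the edge (i,u). lab i u: edge (i,u) is labeled first-class.
gbar is the function 1 - g of the reference process.\<close>

definition aux_choice :: "'j set \<Rightarrow> ('i \<Rightarrow> 'j set) \<Rightarrow> ('i \<Rightarrow> 'j \<Rightarrow> bool) \<Rightarrow> real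
    \<Rightarrow> (real \<Rightarrow> real) \<Rightarrow> (real \<Rightarrow> 'j set \<Rightarrow> real) \<Rightarrow> real \<Rightarrow> 'j set \<Rightarrow> 'i \<Rightarrow> 'j \<Rightarrow> real" where
  "aux_choice J N lab t0 gbar p t S i u =
     (if card (N i) = 1 then 1
      else (let v = the_elem (N i - {u}) in
        if lab i u then 1 / 2
        else if t > t0 then
          (if v \<notin> S then 1 / 2 else 1) *
            min (gbar t / (2 * (1 - fA J p t u) - gA' J p t u v)) 1
        else 0))"

definition aux_rate :: "'i set \<Rightarrow> 'j set \<Rightarrow> ('i \<Rightarrow> 'j set) \<Rightarrow> ('i \<Rightarrow> real) \<Rightarrow> ('i \<Rightarrow> 'j \<Rightarrow> bool)
    \<Rightarrow> real \<Rightarrow> (real \<Rightarrow> real) \<Rightarrow> (real \<Rightarrow> 'j set \<Rightarrow> real) \<Rightarrow> real \<Rightarrow> 'j set \<Rightarrow> 'j \<Rightarrow> real" where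
  "aux_rate I J N lam lab t0 gbar p t S u =
     (\<Sum>i\<in>{i\<in>I. u \<in> N i}. lam i * aux_choice J N lab t0 gbar p t S i u)"

end

theory Submission
  imports Defs
begin

(* Both processes are Markov chains on the set of matched offline vertices, so the expectation of
   any function of the state satisfies the integrated forward equation d/dt E[phi] = E[L phi].
   All comparisons go through a barrier argument: a function that starts nonnegative and whose
   derivative is nonnegative wherever the function is negative stays nonnegative.

   First, under AUX an unmatched vertex u is matched at rate at most
   (1 - ln 2) (1 - f_u) + ln 2 gbar (the last term only after t0; the normalisation of the
   second-class choices is designed for this), while the mean matching probability of a vertex of H
   grows at exactly this rate with f_u replaced by it; hence f_u <= f.
   Second, every AUX rate is at most 1 - ln 2 + 2 ln 2 [t > t0], the rate at which a vertex of H
   is matched once the other one is. So g_{u,v} grows at most at this rate times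
   f_u + f_v - 2 g_{u,v}, which by the first step is below the growth rate of g as soon as
   g_{u,v} > g. *)

lemma nonneg_invariant_has_integral:
  fixes D h :: "real \<Rightarrow> real"
  assumes D_int: "\<And>t. t \<in> {a..b} \<Longrightarrow> (h has_integral (D t - D a)) {a..t}"
    and D_a: "D a \<ge> 0"
    and h_nonneg: "\<And>s. s \<in> {a..b} \<Longrightarrow> D s < 0 \<Longrightarrow> h s \<ge> 0"
    and t: "t \<in> {a..b}"
  shows "D t \<ge> 0"
proof (rule ccontr)
  assume "\<not> D t \<ge> 0"
  hence neg: "D t < 0" by simp
  have D_eq: "D y = D a + integral {a..y} h" if "y \<in> {a..b}" for y
    using integral_unique[OF D_int[OF that]] by simp
  have cont: "continuous_on {a..b} D"
  proof -
    have "h integrable_on {a..b}" using D_int[of b] t by auto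
    then have "continuous_on {a..b} (\<lambda>y. D a + integral {a..y} h)"
      by (intro continuous_intros indefinite_integral_continuous_1)
    then show ?thesis using D_eq by (metis (no_types, lifting) continuous_on_cong)
  qed
  \<comment> \<open>m = max Z is the last time before t with D m \<ge> 0; as D < 0 on (m, t], D increases there\<close>
  define Z where "Z = {a..t} \<inter> D -` {0..}"
  have "compact Z" unfolding Z_def compact_eq_bounded_closed
  proof
    show "closed ({a..t} \<inter> D -` {0..})"
      by (rule continuous_closed_preimage) (use cont t in \<open>auto intro: continuous_on_subset\<close>)
  qed (meson bounded_Int bounded_closed_interval)
  moreover have "a \<in> Z" using D_a t by (auto simp: Z_def)
  ultimately obtain m where m: "m \<in> Z" "\<forall>y\<in>Z. y \<le> m"
    using compact_attains_sup by blast
  have m_bounds: "a \<le> m" "m \<le> t" "D m \<ge> 0" using m by (auto simp: Z_def)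
  with neg have "m < t" by (cases "m = t") auto
  have D_le: "D s \<le> D t" if s: "m < s" "s \<le> t" for s
  proof -
    have h_int: "h integrable_on {a..t}" using D_int t by auto
    have "0 \<le> integral {s..t} h"
    proof (rule Henstock_Kurzweil_Integration.integral_nonneg)
      show "h integrable_on {s..t}"
        using h_int s m_bounds integrable_subinterval_real by fastforce
      fix y assume y: "y \<in> {s..t}"
      then have "y \<in> {a..t}" "\<not> y \<le> m" using s m_bounds by auto
      then have "D y < 0" using m(2) unfolding Z_def by force
      then show "0 \<le> h y" using h_nonneg y s m_bounds t by auto
    qed
    moreover have "integral {a..s} h + integral {s..t} h = integral {a..t} h"
      by (rule Henstock_Kurzweil_Integration.integral_combine) (use s m_bounds h_int in auto)
    ultimately show ?thesis using D_eq[of s] D_eq[of t] s m_bounds t by auto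
  qed
  have "m \<in> {a..b}" using m_bounds t by auto
  then obtain d where d: "d > 0" "\<forall>y\<in>{a..b}. dist y m < d \<longrightarrow> dist (D y) (D m) < - D t"
    using cont neg unfolding continuous_on_iff by (metis neg_0_less_iff_less)
  define s where "s = min (m + d / 2) t"
  have s: "m < s" "s \<le> t" "s \<in> {a..b}" "dist s m < d"
    using d m_bounds \<open>m < t\<close> t by (auto simp: s_def dist_real_def)
  then have "dist (D s) (D m) < - D t" using d by auto
  moreover have "D s \<le> D t" using D_le s by auto
  ultimately show False using m_bounds by (auto simp: dist_real_def)
qed

section \<open>Forward equations for expectations\<close>

definition expectation :: "'j set \<Rightarrow> (real \<Rightarrow> 'j set \<Rightarrow> real) \<Rightarrow> real \<Rightarrow> ('j set \<Rightarrow> real) \<Rightarrow> real" where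
  "expectation J p t \<phi> = (\<Sum>S\<in>Pow J. \<phi> S * p t S)"

definition generator :: "'j set \<Rightarrow> ('j set \<Rightarrow> 'j \<Rightarrow> real) \<Rightarrow> ('j set \<Rightarrow> real) \<Rightarrow> 'j set \<Rightarrow> real" where
  "generator J R \<phi> T = (\<Sum>w\<in>J - T. R T w * (\<phi> (insert w T) - \<phi> T))"

lemma ctmc_law_forward_has_integral:
  assumes "ctmc_law J rate p" and "t \<in> {0..1}" and "S \<subseteq> J"
  shows "((\<lambda>s. (\<Sum>u\<in>S. p s (S - {u}) * rate s (S - {u}) u) - p s S * (\<Sum>u\<in>J - S. rate s S u))
          has_integral (p t S - p 0 S)) {0..t}"
  using assms unfolding ctmc_law_def by blast

lemma ctmc_law_initial: "ctmc_law J rate p \<Longrightarrow> S \<subseteq> J \<Longrightarrow> p 0 S = (if S = {} then 1 else 0)"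
  unfolding ctmc_law_def by blast

text \<open>Summation by parts: the inflow into S through w is the outflow from S - {w} through w.\<close>

lemma sum_forward_eq_sum_generator:
  fixes P :: "'j set \<Rightarrow> real" and R :: "'j set \<Rightarrow> 'j \<Rightarrow> real"
  assumes "finite J"
  shows "(\<Sum>S\<in>Pow J. \<phi> S * ((\<Sum>w\<in>S. P (S - {w}) * R (S - {w}) w) - P S * (\<Sum>w\<in>J - S. R S w)))
       = (\<Sum>T\<in>Pow J. P T * generator J R \<phi> T)"
proof -
  have fin_Pow: "finite (Pow J)" and fin_sub: "\<And>S. S \<in> Pow J \<Longrightarrow> finite S"
    using assms finite_subset by auto
  have "(\<Sum>S\<in>Pow J. \<phi> S * (\<Sum>w\<in>S. P (S - {w}) * R (S - {w}) w))
      = (\<Sum>(S, w)\<in>Sigma (Pow J) id. \<phi> S * (P (S - {w}) * R (S - {w}) w))"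
    by (subst sum.Sigma[symmetric]) (auto simp: fin_Pow fin_sub sum_distrib_left)
  also have "\<dots> = (\<Sum>(T, w)\<in>Sigma (Pow J) (\<lambda>T. J - T). \<phi> (insert w T) * (P T * R T w))"
    by (rule sum.reindex_bij_witness[where i = "\<lambda>(T, w). (insert w T, w)"
          and j = "\<lambda>(S, w). (S - {w}, w)"])
       (auto simp: insert_absorb)
  also have "\<dots> = (\<Sum>T\<in>Pow J. \<Sum>w\<in>J - T. \<phi> (insert w T) * (P T * R T w))"
    by (subst sum.Sigma[symmetric]) (auto simp: fin_Pow assms)
  finally have inflow: "(\<Sum>S\<in>Pow J. \<phi> S * (\<Sum>w\<in>S. P (S - {w}) * R (S - {w}) w))
      = (\<Sum>T\<in>Pow J. \<Sum>w\<in>J - T. \<phi> (insert w T) * (P T * R T w))" .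
  have "(\<Sum>S\<in>Pow J. \<phi> S * ((\<Sum>w\<in>S. P (S - {w}) * R (S - {w}) w) - P S * (\<Sum>w\<in>J - S. R S w)))
      = (\<Sum>T\<in>Pow J. (\<Sum>w\<in>J - T. \<phi> (insert w T) * (P T * R T w)) - \<phi> T * (P T * (\<Sum>w\<in>J - T. R T w)))"
    by (simp only: right_diff_distrib sum_subtractf inflow)
  also have "\<dots> = (\<Sum>T\<in>Pow J. P T * generator J R \<phi> T)"
    unfolding generator_def
    by (rule sum.cong)
       (auto simp: sum_distrib_left sum_subtractf[symmetric] algebra_simps intro!: sum.cong)
  finally show ?thesis .
qed

lemma ctmc_law_expectation_has_integral:
  assumes law: "ctmc_law J rate p" and "finite J" and t: "t \<in> {0..1}"
  shows "((\<lambda>s. \<Sum>T\<in>Pow J. p s T * generator J (rate s) \<phi> T)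
          has_integral (expectation J p t \<phi> - expectation J p 0 \<phi>)) {0..t}"
proof -
  have "((\<lambda>s. \<phi> S * ((\<Sum>u\<in>S. p s (S - {u}) * rate s (S - {u}) u) - p s S * (\<Sum>u\<in>J - S. rate s S u)))
          has_integral (\<phi> S * (p t S - p 0 S))) {0..t}" if "S \<in> Pow J" for S
    using that by (intro has_integral_mult_right ctmc_law_forward_has_integral[OF law t]) auto
  then have "((\<lambda>s. \<Sum>S\<in>Pow J. \<phi> S * ((\<Sum>u\<in>S. p s (S - {u}) * rate s (S - {u}) u)
                                        - p s S * (\<Sum>u\<in>J - S. rate s S u)))
          has_integral (\<Sum>S\<in>Pow J. \<phi> S * (p t S - p 0 S))) {0..t}"
    by (intro has_integral_sum) (use assms in auto)
  moreover have "(\<Sum>S\<in>Pow J. \<phi> S * (p t S - p 0 S)) = expectation J p t \<phi> - expectation J p 0 \<phi>"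
    by (simp add: expectation_def right_diff_distrib sum_subtractf)
  ultimately show ?thesis
    by (simp only: sum_forward_eq_sum_generator[OF \<open>finite J\<close>])
qed

lemma ctmc_law_expectation_0:
  assumes "ctmc_law J rate p" and "finite J"
  shows "expectation J p 0 \<phi> = \<phi> {}"
proof -
  have "expectation J p 0 \<phi> = (\<Sum>S\<in>Pow J. if S = {} then \<phi> S else 0)"
    unfolding expectation_def using ctmc_law_initial[OF assms(1)] by (intro sum.cong) auto
  then show ?thesis using assms(2) by simp
qed

lemma ctmc_law_total_mass:
  assumes "ctmc_law J rate p" and "finite J" and "t \<in> {0..1}"
  shows "(\<Sum>S\<in>Pow J. p t S) = 1"
proof -
  have "((\<lambda>s. 0) has_integral (expectation J p t (\<lambda>_. 1) - 1)) {0..t}"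
    using ctmc_law_expectation_has_integral[OF assms, of "\<lambda>_. 1"]
    by (simp add: generator_def ctmc_law_expectation_0[OF assms(1,2)])
  then have "expectation J p t (\<lambda>_. 1) = 1"
    using has_integral_0 has_integral_unique by fastforce
  then show ?thesis by (simp add: expectation_def)
qed

lemma generator_indicator:
  assumes "finite J" and "u \<in> J"
  shows "generator J R (\<lambda>S. of_bool (u \<in> S)) T = of_bool (u \<notin> T) * R T u"
proof -
  have "generator J R (\<lambda>S. of_bool (u \<in> S)) T
      = (\<Sum>w\<in>J - T. if w = u then of_bool (u \<notin> T) * R T u else 0)"
    unfolding generator_def by (rule sum.cong) auto
  then show ?thesis using assms by simp
qed

lemma generator_pair_indicator:
  assumes "finite J" and "u \<in> J" and "v \<in> J" and "u \<noteq> v"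
  shows "generator J R (\<lambda>S. of_bool (u \<in> S \<and> v \<in> S)) T
       = of_bool (u \<in> T \<and> v \<notin> T) * R T v + of_bool (v \<in> T \<and> u \<notin> T) * R T u"
proof -
  have "generator J R (\<lambda>S. of_bool (u \<in> S \<and> v \<in> S)) T
      = (\<Sum>w\<in>J - T. (if w = v then of_bool (u \<in> T \<and> v \<notin> T) * R T v else 0)
                    + (if w = u then of_bool (v \<in> T \<and> u \<notin> T) * R T u else 0))"
    unfolding generator_def by (rule sum.cong) (use assms(4) in auto)
  then show ?thesis using assms by (simp add: sum.distrib)
qed

lemma sum_Pow_filter_eq_expectation:
  assumes "finite J"
  shows "(\<Sum>S\<in>{S. S \<subseteq> J \<and> P S}. p t S) = expectation J p t (\<lambda>S. of_bool (P S))"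
proof -
  have "{S. S \<subseteq> J \<and> P S} = Pow J \<inter> Collect P" by auto
  then show ?thesis
    using assms by (auto simp: expectation_def sum.inter_restrict intro!: sum.cong)
qed

lemma fA_eq_expectation: "finite J \<Longrightarrow> fA J p t u = expectation J p t (\<lambda>S. of_bool (u \<in> S))"
  unfolding fA_def by (rule sum_Pow_filter_eq_expectation)

lemma gA_eq_expectation: "finite J \<Longrightarrow> gA J p t u v = expectation J p t (\<lambda>S. of_bool (u \<in> S \<and> v \<in> S))"
  unfolding gA_def by (rule sum_Pow_filter_eq_expectation)

lemma gA'_eq_expectation: "finite J \<Longrightarrow> gA' J p t u v = expectation J p t (\<lambda>S. of_bool (u \<notin> S \<and> v \<notin> S))"
  unfolding gA'_def by (rule sum_Pow_filter_eq_expectation)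

lemma ctmc_law_fA_has_integral:
  assumes "ctmc_law J rate p" and "finite J" and "t \<in> {0..1}" and "u \<in> J"
  shows "((\<lambda>s. \<Sum>T\<in>Pow J. p s T * (of_bool (u \<notin> T) * rate s T u)) has_integral fA J p t u) {0..t}"
  using ctmc_law_expectation_has_integral[OF assms(1-3), of "\<lambda>S. of_bool (u \<in> S)"] assms
  by (simp add: generator_indicator fA_eq_expectation ctmc_law_expectation_0)

lemma ctmc_law_gA_has_integral:
  assumes "ctmc_law J rate p" and "finite J" and "t \<in> {0..1}" and "u \<in> J" "v \<in> J" "u \<noteq> v"
  shows "((\<lambda>s. \<Sum>T\<in>Pow J. p s T * (of_bool (u \<in> T \<and> v \<notin> T) * rate s T v
                                     + of_bool (v \<in> T \<and> u \<notin> T) * rate s T u))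
          has_integral gA J p t u v) {0..t}"
  using ctmc_law_expectation_has_integral[OF assms(1-3), of "\<lambda>S. of_bool (u \<in> S \<and> v \<in> S)"] assms
  by (simp add: generator_pair_indicator gA_eq_expectation ctmc_law_expectation_0)

section \<open>The reference process H\<close>

definition res_rate_empty :: "real \<Rightarrow> real \<Rightarrow> real" where
  "res_rate_empty t0 s = 1 - ln 2 + (if s > t0 then ln 2 else 0)"

definition res_rate_single :: "real \<Rightarrow> real \<Rightarrow> real" where
  "res_rate_single t0 s = 1 - ln 2 + (if s > t0 then 2 * ln 2 else 0)"

lemma res_rate_empty_eq: "res_rate t0 s {} u = res_rate_empty t0 s"
  by (simp add: res_rate_def res_rate_empty_def)

lemma res_rate_single_eq: "res_rate t0 s {w} u = res_rate_single t0 s"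
proof -
  have "card (UNIV - {w}) = 1" by (cases w) (auto simp: UNIV_bool)
  then show ?thesis by (simp add: res_rate_def res_rate_single_def)
qed

lemma res_rate_single_nonneg: "res_rate_single t0 s \<ge> 0"
  using ln_2_less_1 by (simp add: res_rate_single_def)

lemma res_law_has_integral:
  assumes law: "ctmc_law UNIV (res_rate t0) q" and t: "t \<in> {0..1}"
  shows "((\<lambda>s. - (2 * res_rate_empty t0 s * q s {})) has_integral (q t {} - 1)) {0..t}"
    and "((\<lambda>s. res_rate_empty t0 s * q s {} - res_rate_single t0 s * q s {w})
          has_integral q t {w}) {0..t}"
    and "((\<lambda>s. res_rate_single t0 s * (q s {True} + q s {False})) has_integral q t UNIV) {0..t}"
proof -
  note forward = ctmc_law_forward_has_integral[OF law t, simplified]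
  note initial = ctmc_law_initial[OF law, simplified]
  have other: "UNIV - {w} = {\<not> w}" "UNIV - {\<not> w} = {w}" by auto
  show "((\<lambda>s. - (2 * res_rate_empty t0 s * q s {})) has_integral (q t {} - 1)) {0..t}"
    using forward[of "{}"] by (simp add: initial UNIV_bool res_rate_empty_eq mult_ac)
  show "((\<lambda>s. res_rate_empty t0 s * q s {} - res_rate_single t0 s * q s {w})
          has_integral q t {w}) {0..t}"
    using forward[of "{w}"]
    by (simp add: initial other res_rate_empty_eq res_rate_single_eq mult_ac)
  have "UNIV - {u} = {\<not> u}" for u by auto
  then show "((\<lambda>s. res_rate_single t0 s * (q s {True} + q s {False})) has_integral q t UNIV) {0..t}"
    using forward[of UNIV] by (simp add: initial UNIV_bool res_rate_single_eq algebra_simps)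
qed

lemma res_law_total:
  assumes "ctmc_law UNIV (res_rate t0) q" and "t \<in> {0..1}"
  shows "q t {} + q t {True} + q t {False} + q t UNIV = 1"
proof -
  have "Pow (UNIV :: bool set) = {{}, {True}, {False}, UNIV}"
    by (auto simp: UNIV_bool Pow_insert)
  then show ?thesis
    using ctmc_law_total_mass[OF assms(1) _ assms(2)] by (simp add: UNIV_bool)
qed

lemma res_law_empty_nonneg:
  assumes law: "ctmc_law UNIV (res_rate t0) q" and t: "t \<in> {0..1}"
  shows "q t {} \<ge> 0"
proof (rule nonneg_invariant_has_integral[where D = "\<lambda>s. q s {}"
      and h = "\<lambda>s. - (2 * res_rate_empty t0 s * q s {})"])
  show "((\<lambda>s. - (2 * res_rate_empty t0 s * q s {})) has_integral q y {} - q 0 {}) {0..y}"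
    if "y \<in> {0..1}" for y
    using res_law_has_integral(1)[OF law that] ctmc_law_initial[OF law] by simp
  have "res_rate_empty t0 s \<ge> 0" for s
    using ln_2_less_1 by (simp add: res_rate_empty_def)
  then show "0 \<le> - (2 * res_rate_empty t0 s * q s {})" if "q s {} < 0" for s
    using that by (simp add: mult_nonneg_nonpos)
qed (use t ctmc_law_initial[OF law] in auto)

lemma gH_le_1:
  assumes law: "ctmc_law UNIV (res_rate t0) q" and t: "t \<in> {0..1}"
  shows "gH q t \<le> 1"
proof -
  have "0 \<le> 1 - q t UNIV"
  proof (rule nonneg_invariant_has_integral[where D = "\<lambda>s. 1 - q s UNIV"
        and h = "\<lambda>s. - (res_rate_single t0 s * (q s {True} + q s {False}))"])
    show "((\<lambda>s. - (res_rate_single t0 s * (q s {True} + q s {False}))) has_integral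
            (1 - q y UNIV) - (1 - q 0 UNIV)) {0..y}" if "y \<in> {0..1}" for y
      using has_integral_neg[OF res_law_has_integral(3)[OF law that]] ctmc_law_initial[OF law]
      by simp
    fix s :: real assume s: "s \<in> {0..1}" and "1 - q s UNIV < 0"
    then have "q s {True} + q s {False} \<le> 0"
      using res_law_total[OF law s] res_law_empty_nonneg[OF law s] by linarith
    then show "0 \<le> - (res_rate_single t0 s * (q s {True} + q s {False}))"
      using res_rate_single_nonneg by (simp add: mult_nonneg_nonpos)
  qed (use t ctmc_law_initial[OF law] in auto)
  then show ?thesis by (simp add: gH_def)
qed

text \<open>The mean of the probabilities that a, resp. b, is matched. By symmetry it equals fH,
  but using the mean avoids having to prove that symmetry.\<close>

definition fH_avg :: "(real \<Rightarrow> bool set \<Rightarrow> real) \<Rightarrow> real \<Rightarrow> real" where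
  "fH_avg q t = (q t {True} + q t {False}) / 2 + q t UNIV"

lemma fH_avg_has_integral:
  assumes law: "ctmc_law UNIV (res_rate t0) q" and t: "t \<in> {0..1}"
  shows "((\<lambda>s. (1 - ln 2) * (1 - fH_avg q s) + ln 2 * (if s > t0 then 1 - gH q s else 0))
          has_integral fH_avg q t) {0..t}"
proof -
  have "((\<lambda>s. (1/2) * ((res_rate_empty t0 s * q s {} - res_rate_single t0 s * q s {True})
                      + (res_rate_empty t0 s * q s {} - res_rate_single t0 s * q s {False}))
             + res_rate_single t0 s * (q s {True} + q s {False}))
         has_integral ((1/2) * (q t {True} + q t {False}) + q t UNIV)) {0..t}"
    by (intro has_integral_add has_integral_mult_right res_law_has_integral[OF law t])
  moreover have "(1/2) * (q t {True} + q t {False}) + q t UNIV = fH_avg q t"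
    by (simp add: fH_avg_def)
  moreover have "(1/2) * ((res_rate_empty t0 s * q s {} - res_rate_single t0 s * q s {True})
                      + (res_rate_empty t0 s * q s {} - res_rate_single t0 s * q s {False}))
             + res_rate_single t0 s * (q s {True} + q s {False})
       = (1 - ln 2) * (1 - fH_avg q s) + ln 2 * (if s > t0 then 1 - gH q s else 0)"
    if "s \<in> {0..t}" for s
  proof -
    have empty: "q s {} = 1 - q s {True} - q s {False} - q s UNIV"
      using res_law_total[OF law] that t by force
    show ?thesis unfolding empty
      by (cases "t0 < s")
         (simp_all add: res_rate_empty_def res_rate_single_def fH_avg_def gH_def field_simps)
  qed
  ultimately show ?thesis
    using has_integral_cong by (metis (no_types, lifting))
qed

section \<open>Matching rates of AUX\<close>

lemma sum_unmatched_eq: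
  assumes "finite J" and "(\<Sum>T\<in>Pow J. p s T) = 1"
  shows "(\<Sum>T\<in>Pow J. p s T * (of_bool (u \<notin> T) * c)) = c * (1 - fA J p s u)"
proof -
  have "(\<Sum>T\<in>Pow J. p s T * (of_bool (u \<notin> T) * c))
      = (\<Sum>T\<in>Pow J. c * p s T - c * (of_bool (u \<in> T) * p s T))"
    by (rule sum.cong) auto
  also have "\<dots> = c * (\<Sum>T\<in>Pow J. p s T) - c * expectation J p s (\<lambda>S. of_bool (u \<in> S))"
    by (simp only: sum_subtractf sum_distrib_left expectation_def)
  also have "\<dots> = c * (1 - fA J p s u)"
    using assms by (simp add: fA_eq_expectation right_diff_distrib)
  finally show ?thesis .
qed

text \<open>The normalisation in AUX is chosen so that the expected weight of the choice,
  1 - f_u - g'_{u,w}/2, is exactly half the denominator.\<close>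

lemma second_class_flux_le:
  fixes u w :: 'j
  assumes finJ: "finite J" and tot: "(\<Sum>T\<in>Pow J. p s T) = 1"
    and p_nonneg: "\<And>T. T \<subseteq> J \<Longrightarrow> p s T \<ge> 0" and "g \<ge> 0"
  defines "M \<equiv> min (g / (2 * (1 - fA J p s u) - gA' J p s u w)) 1"
  shows "(\<Sum>T\<in>Pow J. p s T * (of_bool (u \<notin> T) * ((if w \<notin> T then 1 / 2 else 1) * M))) \<le> g / 2"
proof -
  define K where "K = (\<Sum>T\<in>Pow J. p s T * (of_bool (u \<notin> T) * (if w \<notin> T then 1 / 2 else 1)))"
  have "K = (\<Sum>T\<in>Pow J. p s T * (of_bool (u \<notin> T) * 1) - 1 / 2 * (of_bool (u \<notin> T \<and> w \<notin> T) * p s T))"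
    unfolding K_def by (rule sum.cong) auto
  also have "\<dots> = (\<Sum>T\<in>Pow J. p s T * (of_bool (u \<notin> T) * 1))
                  - 1 / 2 * expectation J p s (\<lambda>S. of_bool (u \<notin> S \<and> w \<notin> S))"
    by (simp only: sum_subtractf sum_distrib_left expectation_def)
  also have "\<dots> = (1 - fA J p s u) - gA' J p s u w / 2"
    using sum_unmatched_eq[where p = p and s = s and u = u and c = 1, OF finJ tot]
    by (simp add: gA'_eq_expectation[OF finJ])
  finally have K_eq: "2 * K = 2 * (1 - fA J p s u) - gA' J p s u w" by simp
  have "K \<ge> 0" unfolding K_def by (intro sum_nonneg mult_nonneg_nonneg) (auto intro: p_nonneg)
  have "M * (2 * K) \<le> g"
  proof (cases "K = 0")
    case False
    with \<open>K \<ge> 0\<close> show ?thesis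
      unfolding M_def K_eq[symmetric] by (cases "g / (2 * K) \<le> 1") (auto simp: min_def field_simps)
  qed (use \<open>g \<ge> 0\<close> in simp)
  moreover have "(\<Sum>T\<in>Pow J. p s T * (of_bool (u \<notin> T) * ((if w \<notin> T then 1 / 2 else 1) * M))) = M * K"
    unfolding K_def by (simp add: sum_distrib_left mult_ac)
  ultimately show ?thesis by simp
qed

lemma pair_flux_le:
  assumes "finite J" and p_nonneg: "\<And>T. T \<subseteq> J \<Longrightarrow> p s T \<ge> 0"
    and "\<And>T. R T u \<le> c" and "\<And>T. R T v \<le> c"
  shows "(\<Sum>T\<in>Pow J. p s T * (of_bool (u \<in> T \<and> v \<notin> T) * R T v + of_bool (v \<in> T \<and> u \<notin> T) * R T u))
       \<le> c * (fA J p s u + fA J p s v - 2 * gA J p s u v)"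
proof -
  have "(\<Sum>T\<in>Pow J. p s T * (of_bool (u \<in> T \<and> v \<notin> T) * R T v + of_bool (v \<in> T \<and> u \<notin> T) * R T u))
      \<le> (\<Sum>T\<in>Pow J. p s T * (of_bool (u \<in> T \<and> v \<notin> T) * c + of_bool (v \<in> T \<and> u \<notin> T) * c))"
    by (intro sum_mono mult_left_mono add_mono) (auto simp: p_nonneg assms(3,4))
  also have "\<dots> = c * (\<Sum>T\<in>Pow J. of_bool (u \<in> T) * p s T + of_bool (v \<in> T) * p s T
                                  - 2 * (of_bool (u \<in> T \<and> v \<in> T) * p s T))"
    by (simp add: sum_distrib_left) (rule sum.cong; auto simp: algebra_simps)
  also have "\<dots> = c * (expectation J p s (\<lambda>S. of_bool (u \<in> S))
                     + expectation J p s (\<lambda>S. of_bool (v \<in> S))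
                     - 2 * expectation J p s (\<lambda>S. of_bool (u \<in> S \<and> v \<in> S)))"
    by (simp only: expectation_def sum.distrib sum_subtractf sum_distrib_left)
  also have "\<dots> = c * (fA J p s u + fA J p s v - 2 * gA J p s u v)"
    using assms(1) by (simp add: fA_eq_expectation gA_eq_expectation)
  finally show ?thesis .
qed

locale aux_instance =
  fixes I :: "'i set" and J :: "'j set" and N :: "'i \<Rightarrow> 'j set"
    and lam :: "'i \<Rightarrow> real" and x :: "'i \<Rightarrow> 'j \<Rightarrow> real" and lab :: "'i \<Rightarrow> 'j \<Rightarrow> bool"
  assumes finI: "finite I" and finJ: "finite J"
    and lam_pos: "\<forall>i\<in>I. lam i > 0"
    and x_sum: "\<forall>j\<in>J. (\<Sum>i\<in>{i\<in>I. j \<in> N i}. x i j) = 1"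
    and classes: "\<forall>i\<in>I. (card (N i) = 1 \<and> (\<forall>j\<in>N i. x i j = lam i))
                        \<or> (card (N i) = 2 \<and> (\<forall>j\<in>N i. x i j = lam i / 2))"
    and lab_first: "\<forall>i\<in>I. card (N i) = 1 \<longrightarrow> (\<forall>j\<in>N i. lab i j)"
    and lab_sum: "\<forall>j\<in>J. (\<Sum>i\<in>{i\<in>I. j \<in> N i \<and> lab i j}. x i j) = 1 - ln 2"
begin

lemma sum_split_by_label:
  assumes "w \<in> J"
  shows "(\<Sum>i\<in>{i\<in>I. w \<in> N i}. x i w * (if lab i w then A else B)) = (1 - ln 2) * A + ln 2 * B"
proof -
  let ?I = "{i\<in>I. w \<in> N i}"
  have fin: "finite ?I" using finI by simp
  have "?I \<inter> {i. lab i w} = {i\<in>I. w \<in> N i \<and> lab i w}"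
    and "?I \<inter> - {i. lab i w} = {i\<in>I. w \<in> N i \<and> \<not> lab i w}"
    by auto
  then have split: "(\<Sum>i\<in>?I. if lab i w then f i else g i)
      = (\<Sum>i\<in>{i\<in>I. w \<in> N i \<and> lab i w}. f i) + (\<Sum>i\<in>{i\<in>I. w \<in> N i \<and> \<not> lab i w}. g i)"
    for f g :: "'i \<Rightarrow> real"
    using sum.If_cases[OF fin, of "\<lambda>i. lab i w" f g] by simp
  have "(\<Sum>i\<in>{i\<in>I. w \<in> N i \<and> \<not> lab i w}. x i w) = ln 2"
    using split[of "\<lambda>i. x i w" "\<lambda>i. x i w"] x_sum lab_sum assms by simp
  then show ?thesis
    using split[of "\<lambda>i. x i w * A" "\<lambda>i. x i w * B"] lab_sum assms
    by (simp add: if_distrib sum_distrib_right[symmetric])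
qed

lemma lam_aux_choice_le:
  assumes i: "i \<in> I" and w: "w \<in> N i"
  shows "lam i * aux_choice J N lab t0 gbar p s T i w
       \<le> x i w * (if lab i w then 1 else if s > t0 then 2 else 0)"
proof (cases "card (N i) = 1")
  case True
  then show ?thesis using classes lab_first i w by (auto simp: aux_choice_def)
next
  case False
  then have x_eq: "x i w = lam i / 2" using classes i w by auto
  have min_le: "c * min y 1 \<le> 1" if "0 \<le> c" "c \<le> 1" for c y :: real
    using mult_left_mono[OF min.cobounded2[of y 1] that(1)] that(2) by simp
  have "aux_choice J N lab t0 gbar p s T i w \<le> (if lab i w then 1 / 2 else if s > t0 then 1 else 0)"
    using False by (auto simp: aux_choice_def Let_def intro: min_le)
  then have "lam i * aux_choice J N lab t0 gbar p s T i w
      \<le> lam i * (if lab i w then 1 / 2 else if s > t0 then 1 else 0)"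
    using lam_pos i by (intro mult_left_mono) auto
  then show ?thesis using x_eq by (auto split: if_splits)
qed

lemma aux_rate_le:
  assumes "w \<in> J"
  shows "aux_rate I J N lam lab t0 gbar p s T w \<le> res_rate_single t0 s"
proof -
  have "aux_rate I J N lam lab t0 gbar p s T w
      \<le> (\<Sum>i\<in>{i\<in>I. w \<in> N i}. x i w * (if lab i w then 1 else if s > t0 then 2 else 0))"
    unfolding aux_rate_def by (intro sum_mono lam_aux_choice_le) auto
  also have "\<dots> = res_rate_single t0 s"
    using sum_split_by_label[OF assms] by (simp add: res_rate_single_def)
  finally show ?thesis .
qed

lemma aux_choice_flux_le:
  assumes i: "i \<in> I" and u: "u \<in> N i" and tot: "(\<Sum>T\<in>Pow J. p s T) = 1"
    and p_nonneg: "\<And>T. T \<subseteq> J \<Longrightarrow> p s T \<ge> 0" and gbar_nonneg: "gbar s \<ge> 0"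
  shows "lam i * (\<Sum>T\<in>Pow J. p s T * (of_bool (u \<notin> T) * aux_choice J N lab t0 gbar p s T i u))
       \<le> x i u * (if lab i u then 1 - fA J p s u else if s > t0 then gbar s else 0)"
proof -
  note unmatched = sum_unmatched_eq[where p = p and s = s and u = u, OF finJ tot]
  consider (first_class) "card (N i) = 1"
    | (first_label) "card (N i) \<noteq> 1" "lab i u"
    | (second_label_late) "card (N i) \<noteq> 1" "\<not> lab i u" "s > t0"
    | (second_label_early) "card (N i) \<noteq> 1" "\<not> lab i u" "\<not> s > t0"
    by blast
  then show ?thesis
  proof cases
    case first_class
    then have "x i u = lam i" "lab i u" using classes lab_first i u by auto
    with first_class show ?thesis using unmatched[of 1] by (simp add: aux_choice_def)
  next
    case first_label
    then have "x i u = lam i / 2" using classes i u by auto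
    moreover have "aux_choice J N lab t0 gbar p s T i u = 1 / 2" for T
      using first_label by (simp add: aux_choice_def)
    ultimately show ?thesis using first_label by (simp only: unmatched) simp
  next
    case second_label_late
    have "(\<Sum>T\<in>Pow J. p s T * (of_bool (u \<notin> T) * aux_choice J N lab t0 gbar p s T i u)) \<le> gbar s / 2"
      using second_class_flux_le[where p = p and s = s, OF finJ tot p_nonneg gbar_nonneg,
          of u "the_elem (N i - {u})"]
        second_label_late
      by (simp add: aux_choice_def Let_def)
    then have "lam i * (\<Sum>T\<in>Pow J. p s T * (of_bool (u \<notin> T) * aux_choice J N lab t0 gbar p s T i u))
        \<le> lam i * (gbar s / 2)"
      using lam_pos i by (intro mult_left_mono) auto
    also have "\<dots> = x i u * gbar s"
      using classes i u second_label_late by auto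
    finally show ?thesis using second_label_late by simp
  next
    case second_label_early
    then show ?thesis by (simp add: aux_choice_def)
  qed
qed

lemma aux_flux_le:
  assumes u: "u \<in> J" and tot: "(\<Sum>T\<in>Pow J. p s T) = 1"
    and p_nonneg: "\<And>T. T \<subseteq> J \<Longrightarrow> p s T \<ge> 0" and gbar_nonneg: "gbar s \<ge> 0"
  shows "(\<Sum>T\<in>Pow J. p s T * (of_bool (u \<notin> T) * aux_rate I J N lam lab t0 gbar p s T u))
       \<le> (1 - ln 2) * (1 - fA J p s u) + ln 2 * (if s > t0 then gbar s else 0)"
proof -
  have "(\<Sum>T\<in>Pow J. p s T * (of_bool (u \<notin> T) * aux_rate I J N lam lab t0 gbar p s T u))
      = (\<Sum>i\<in>{i\<in>I. u \<in> N i}.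
           lam i * (\<Sum>T\<in>Pow J. p s T * (of_bool (u \<notin> T) * aux_choice J N lab t0 gbar p s T i u)))"
    unfolding aux_rate_def by (simp add: sum_distrib_left mult_ac) (rule sum.swap)
  also have "\<dots> \<le> (\<Sum>i\<in>{i\<in>I. u \<in> N i}.
                      x i u * (if lab i u then 1 - fA J p s u else if s > t0 then gbar s else 0))"
    by (intro sum_mono aux_choice_flux_le) (use assms in auto)
  also have "\<dots> = (1 - ln 2) * (1 - fA J p s u) + ln 2 * (if s > t0 then gbar s else 0)"
    by (rule sum_split_by_label[OF u])
  finally show ?thesis .
qed

end

locale aux_process = aux_instance I J N lam x lab
  for I :: "'i set" and J :: "'j set" and N :: "'i \<Rightarrow> 'j set"
    and lam :: "'i \<Rightarrow> real" and x :: "'i \<Rightarrow> 'j \<Rightarrow> real" and lab :: "'i \<Rightarrow> 'j \<Rightarrow> bool" +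
  fixes t0 :: real and q :: "real \<Rightarrow> bool set \<Rightarrow> real" and p :: "real \<Rightarrow> 'j set \<Rightarrow> real"
  assumes H_law: "ctmc_law UNIV (res_rate t0) q"
    and AUX_law: "ctmc_law J (aux_rate I J N lam lab t0 (\<lambda>t. 1 - gH q t) p) p"
    and AUX_nonneg: "\<forall>t\<in>{0..1}. \<forall>S. S \<subseteq> J \<longrightarrow> p t S \<ge> 0"
begin

abbreviation aux_rate_gH :: "real \<Rightarrow> 'j set \<Rightarrow> 'j \<Rightarrow> real" where
  "aux_rate_gH \<equiv> aux_rate I J N lam lab t0 (\<lambda>t. 1 - gH q t) p"

lemma fA_le_fH_avg:
  assumes u: "u \<in> J" and t: "t \<in> {0..1}"
  shows "fA J p t u \<le> fH_avg q t"
proof -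
  let ?flux = "\<lambda>s. \<Sum>T\<in>Pow J. p s T * (of_bool (u \<notin> T) * aux_rate_gH s T u)"
  let ?bound = "\<lambda>s. (1 - ln 2) * (1 - fH_avg q s) + ln 2 * (if s > t0 then 1 - gH q s else 0)"
  have "0 \<le> fH_avg q t - fA J p t u"
  proof (rule nonneg_invariant_has_integral[where D = "\<lambda>s. fH_avg q s - fA J p s u"
        and h = "\<lambda>s. ?bound s - ?flux s" and a = 0 and b = 1])
    have initial: "fH_avg q 0 = 0" "fA J p 0 u = 0"
      using ctmc_law_initial[OF H_law]
      by (simp_all add: fH_avg_def fA_eq_expectation[OF finJ]
          ctmc_law_expectation_0[OF AUX_law finJ])
    show "((\<lambda>s. ?bound s - ?flux s)
            has_integral (fH_avg q y - fA J p y u) - (fH_avg q 0 - fA J p 0 u)) {0..y}"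
      if "y \<in> {0..1}" for y
      using has_integral_diff[OF fH_avg_has_integral[OF H_law that]
          ctmc_law_fA_has_integral[OF AUX_law finJ that u]]
      by (simp add: initial)
    show "0 \<le> fH_avg q 0 - fA J p 0 u" by (simp add: initial)
    fix s :: real assume s: "s \<in> {0..1}" and "fH_avg q s - fA J p s u < 0"
    then have "(1 - ln 2) * (1 - fA J p s u) \<le> (1 - ln 2) * (1 - fH_avg q s)"
      using ln_2_less_1 by (intro mult_left_mono) auto
    moreover have "?flux s
        \<le> (1 - ln 2) * (1 - fA J p s u) + ln 2 * (if s > t0 then 1 - gH q s else 0)"
      using AUX_nonneg s gH_le_1[OF H_law s]
      by (intro aux_flux_le u ctmc_law_total_mass[OF AUX_law finJ s]) auto
    ultimately show "0 \<le> ?bound s - ?flux s" by simp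
  qed (use t in auto)
  then show ?thesis by simp
qed

lemma gA_le_gH:
  assumes u: "u \<in> J" and v: "v \<in> J" and "u \<noteq> v" and t: "t \<in> {0..1}"
  shows "gA J p t u v \<le> gH q t"
proof -
  let ?flux = "\<lambda>s. \<Sum>T\<in>Pow J. p s T * (of_bool (u \<in> T \<and> v \<notin> T) * aux_rate_gH s T v
                                          + of_bool (v \<in> T \<and> u \<notin> T) * aux_rate_gH s T u)"
  let ?H_flux = "\<lambda>s. res_rate_single t0 s * (q s {True} + q s {False})"
  have "0 \<le> gH q t - gA J p t u v"
  proof (rule nonneg_invariant_has_integral[where D = "\<lambda>s. gH q s - gA J p s u v"
        and h = "\<lambda>s. ?H_flux s - ?flux s" and a = 0 and b = 1])
    have initial: "gH q 0 = 0" "gA J p 0 u v = 0"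
      using ctmc_law_initial[OF H_law]
      by (simp_all add: gH_def gA_eq_expectation[OF finJ] ctmc_law_expectation_0[OF AUX_law finJ])
    show "((\<lambda>s. ?H_flux s - ?flux s)
            has_integral (gH q y - gA J p y u v) - (gH q 0 - gA J p 0 u v)) {0..y}"
      if "y \<in> {0..1}" for y
      using has_integral_diff[OF res_law_has_integral(3)[OF H_law that]
          ctmc_law_gA_has_integral[OF AUX_law finJ that u v \<open>u \<noteq> v\<close>]]
      by (simp add: initial gH_def ctmc_law_initial[OF H_law])
    show "0 \<le> gH q 0 - gA J p 0 u v" by (simp add: initial)
    fix s :: real assume s: "s \<in> {0..1}" and "gH q s - gA J p s u v < 0"
    moreover have "fA J p s u \<le> fH_avg q s" "fA J p s v \<le> fH_avg q s"
      using fA_le_fH_avg u v s by auto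
    ultimately have "fA J p s u + fA J p s v - 2 * gA J p s u v \<le> q s {True} + q s {False}"
      unfolding fH_avg_def gH_def by argo
    then have "res_rate_single t0 s * (fA J p s u + fA J p s v - 2 * gA J p s u v) \<le> ?H_flux s"
      using res_rate_single_nonneg by (intro mult_left_mono) auto
    moreover have "?flux s \<le> res_rate_single t0 s * (fA J p s u + fA J p s v - 2 * gA J p s u v)"
      using AUX_nonneg s by (intro pair_flux_le finJ aux_rate_le u v) auto
    ultimately show "0 \<le> ?H_flux s - ?flux s" by simp
  qed (use t in auto)
  then show ?thesis by simp
qed

end

theorem lemma4p5:
  fixes I :: "'i set" and J :: "'j set" and N :: "'i \<Rightarrow> 'j set"
    and lam :: "'i \<Rightarrow> real" and x :: "'i \<Rightarrow> 'j \<Rightarrow> real"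
    and lab :: "'i \<Rightarrow> 'j \<Rightarrow> bool" and t0 :: real
    and q :: "real \<Rightarrow> bool set \<Rightarrow> real"
    and p :: "real \<Rightarrow> 'j set \<Rightarrow> real"
  assumes finI: "finite I" and finJ: "finite J"
    and nbrs: "\<forall>i\<in>I. N i \<subseteq> J"
    and lam_pos: "\<forall>i\<in>I. lam i > 0"
    and x_nonneg: "\<forall>i\<in>I. \<forall>j\<in>N i. x i j \<ge> 0"
    and x_sum: "\<forall>j\<in>J. (\<Sum>i\<in>{i\<in>I. j \<in> N i}. x i j) = 1"
    and classes: "\<forall>i\<in>I. (card (N i) = 1 \<and> (\<forall>j\<in>N i. x i j = lam i))
                        \<or> (card (N i) = 2 \<and> (\<forall>j\<in>N i. x i j = lam i / 2))"
    and lab_first: "\<forall>i\<in>I. card (N i) = 1 \<longrightarrow> (\<forall>j\<in>N i. lab i j)"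
    and lab_sum: "\<forall>j\<in>J. (\<Sum>i\<in>{i\<in>I. j \<in> N i \<and> lab i j}. x i j) = 1 - ln 2"
    and t0: "0 \<le> t0" "t0 \<le> 1"
    and H_law: "ctmc_law UNIV (res_rate t0) q"
    and AUX_law: "ctmc_law J (aux_rate I J N lam lab t0 (\<lambda>t. 1 - gH q t) p) p"
    and AUX_nonneg: "\<forall>t\<in>{0..1}. \<forall>S. S \<subseteq> J \<longrightarrow> p t S \<ge> 0"
  shows "\<forall>u\<in>J. \<forall>v\<in>J. u \<noteq> v \<longrightarrow> (\<forall>t\<in>{0..1}. gA J p t u v \<le> gH q t)"
proof (intro ballI impI)
  interpret aux_process I J N lam x lab t0 q p
    by unfold_locales
      (fact finI finJ lam_pos x_sum classes lab_first lab_sum H_law AUX_law AUX_nonneg)+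
  fix u v :: 'j and t :: real
  assume "u \<in> J" "v \<in> J" "u \<noteq> v" "t \<in> {0..1}"
  then show "gA J p t u v \<le> gH q t" by (rule gA_le_gH)
qed

end
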